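(* Let $\psi(x,z)$ be a trigonometric Darboux transform of $e^{xz}$, with $\psi=\frac1{f(z)}Pe^{xz}$ and $e^{xz}=\frac{1}{g(z)}Q\psi$, where $P,Q\in\mathbb{C}(e^x)[\partial]$. Write $$P=\frac{1}{\theta(e^x)}\overline P,\qquad Q=\overline Q\,\frac{1}{\nu(e^x)},$$ with $\overline P,\overline Q\in\mathbb{C}[e^x][\partial]$ and $\theta,\nu$ polynomials. Then $$\psi(x,z)=\frac{1}{\theta(e^x)}\frac{1}{f(z)}\,b(\overline P)e^{xz},\qquad e^{xz}=\frac{1}{\nu(e^x)}\,b(\overline Q)\frac{1}{g(z)}\psi(x,z),$$ where $b(\overline P)$ and $b(\overline Q)$ act in the variable $z$. Consequently $\psi$ satisfies the difference equation in $z$ $$f(z)^{-1}\,b(\overline P)\,b(\overline Q)\,g(z)^{-1}\psi(x,z)=\theta(e^x)\nu(e^x)\psi(x,z),$$ in addition to the differential equation $PQ\psi=f(z)g(z)\psi$ in $x$.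
   Context: Notation: $\partial=\frac{\partial}{\partial x}$. Darboux transform: $f,g$ are monic polynomials, $P,Q$ are monic differential operators, and $\mathrm{ord}\,P=\deg f$. It is trigonometric when the coefficients of $P$ and $Q$ are rational in $e^x$. Shift operator: $T$ acts on functions of $z$ by $Tf(z)=f(z+1)$. The map $b$: the anti-isomorphism $b:\mathbb{C}[e^x][\partial]\to\mathbb{C}[z][T]$ determined by $b(e^x)=T$ and $b(\partial)=z$; explicitly $b\big(\sum a_{ij}e^{ix}\partial^j\big)=\sum a_{ij}z^jT^i$. It satisfies $A e^{xz}=b(A)e^{xz}$ for every $A\in\mathbb{C}[e^x][\partial]$. *)

theory Defs
  imports "HOL-Analysis.Analysis" "HOL-Computational_Algebra.Polynomial"
begin

text \<open>An element A of C[e^x][d] is encoded as a polynomial in d whose coefficients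
  are polynomials in w = e^x:  A = sum_{i,j} a_ij e^{ix} d^j with
  a_ij = coeff (coeff A j) i.\<close>

type_synonym dop = "complex poly poly"

definition dop_apply :: "dop \<Rightarrow> (complex \<Rightarrow> complex) \<Rightarrow> complex \<Rightarrow> complex" where
  "dop_apply A h x = (\<Sum>j\<le>degree A. poly (coeff A j) (exp x) * (deriv ^^ j) h x)"

text \<open>Action of b(A) = sum a_ij z^j T^i in C[z][T] on a function of z, (T h)(z) = h(z+1).\<close>
definition bop_apply :: "dop \<Rightarrow> (complex \<Rightarrow> complex) \<Rightarrow> complex \<Rightarrow> complex" where
  "bop_apply A h z = (\<Sum>j\<le>degree A. \<Sum>i\<le>degree (coeff A j).
      coeff (coeff A j) i * z ^ j * h (z + of_nat i))"

text \<open>P = (1/theta(e^x)) Pbar  and  Q = Qbar (1/nu(e^x)).\<close>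
definition left_rat_apply :: "complex poly \<Rightarrow> dop \<Rightarrow> (complex \<Rightarrow> complex) \<Rightarrow> complex \<Rightarrow> complex" where
  "left_rat_apply \<theta> A h x = dop_apply A h x / poly \<theta> (exp x)"

definition right_rat_apply :: "dop \<Rightarrow> complex poly \<Rightarrow> (complex \<Rightarrow> complex) \<Rightarrow> complex \<Rightarrow> complex" where
  "right_rat_apply A \<nu> h x = dop_apply A (\<lambda>y. h y / poly \<nu> (exp y)) x"

end

theory Submission
  imports Defs
begin

text \<open>
  Write P(c) for the symbol of Pbar at
  c, a polynomial in u = e^x with Pbar e^{xc} = P(c)(e^x) e^{xc} = b(Pbar) e^{xc}.  The
  first identity, psi = (1/theta)(1/f) b(Pbar) e^{xz}, is then immediate, and the
  differential equation P Q psi = f g psi follows by differentiating the inversion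
  relation Q psi = g e^{xz}.  The difference equation follows from the second identity
  applied at all shifts z + i together with the first one.

  The heart of the matter is the second identity.  Expanding b(Qbar) (1/g) psi gives
  e^{xz}/theta(e^x) times a polynomial S_z(e^x), so one must show S_z = theta nu.  Using
  the inversion relation at each shifted point z + i one shows that Qbar annihilates
  (S_z - theta nu)(e^x)/(theta nu)(e^x) e^{xz}.  An indicial argument at e^x = \<infinity>
  shows that such a function vanishes unless deg (S_z - theta nu) - deg (theta nu) + z is
  a root of the indicial polynomial of Qbar; this excludes only finitely many z, and
  continuity of S_z in z removes the exception.
\<close>

lemma deriv_iterate_eqI:
  assumes U: "open U" and chain: "\<And>j y. y \<in> U \<Longrightarrow> (F j has_field_derivative F (Suc j) y) (at y)"
    and start: "\<And>y. y \<in> U \<Longrightarrow> h y = F 0 y" and y: "y \<in> U"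
  shows "(deriv ^^ j) h y = F j y"
  using y
proof (induction j arbitrary: y)
  case 0
  then show ?case using start by simp
next
  case (Suc j)
  have "eventually (\<lambda>t. (deriv ^^ j) h t = F j t) (nhds y)"
    using Suc.IH eventually_nhds[of _ y] U Suc.prems by blast
  then have "(deriv ^^ Suc j) h y = deriv (F j) y"
    by (simp add: deriv_cong_ev)
  also have "\<dots> = F (Suc j) y"
    using chain[OF Suc.prems] by (rule DERIV_imp_deriv)
  finally show ?case .
qed

lemma deriv_iterate_exp: "(deriv ^^ j) (\<lambda>y. exp (y * c)) x = c ^ j * exp (x * c)"
  by (rule deriv_iterate_eqI[of UNIV "\<lambda>j y. c ^ j * exp (y * c)"])
     (auto intro!: derivative_eq_intros)

text \<open>The symbol of A = sum a_l(e^x) d^l at the spectral value c: the polynomial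
  sum_l c^l a_l(u).  By the two lemmas below it describes both actions on
  exponentials, A e^{xc} and b(A) e^{xz}.\<close>

definition exp_symbol :: "dop \<Rightarrow> complex \<Rightarrow> complex poly" where
  "exp_symbol A c = (\<Sum>l\<le>degree A. smult (c ^ l) (coeff A l))"

lemma poly_exp_symbol: "poly (exp_symbol A c) u = (\<Sum>l\<le>degree A. poly (coeff A l) u * c ^ l)"
  by (simp add: exp_symbol_def poly_sum mult.commute)

lemma dop_apply_exp: "dop_apply A (\<lambda>y. exp (y * c)) x = poly (exp_symbol A c) (exp x) * exp (x * c)"
  unfolding dop_apply_def deriv_iterate_exp poly_exp_symbol sum_distrib_right
  by (intro sum.cong refl) (simp add: mult_ac)

lemma exp_mult_shift: "exp ((x::complex) * (z + of_nat i)) = exp (x * z) * exp x ^ i"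
  by (simp add: distrib_left exp_add mult.commute flip: exp_of_nat_mult)

text \<open>b(A) e^{xz} = (symbol of A at z)(e^x) e^{xz}; together with the previous lemma
  this is the defining property A e^{xz} = b(A) e^{xz} of the map b.\<close>

lemma bop_apply_exp: "bop_apply A (\<lambda>w. exp (x * w)) z = poly (exp_symbol A z) (exp x) * exp (x * z)"
proof -
  have "(\<Sum>i\<le>degree (coeff A j). coeff (coeff A j) i * z ^ j * exp (x * (z + of_nat i)))
     = poly (coeff A j) (exp x) * z ^ j * exp (x * z)" for j
    unfolding exp_mult_shift poly_altdef[of "coeff A j" "exp x"] sum_distrib_right
    by (intro sum.cong refl) (simp add: mult_ac)
  then show ?thesis
    unfolding bop_apply_def poly_exp_symbol sum_distrib_right by simp
qed

text \<open>Functions of the shape q(e^y) / w(e^y)^m e^{cy} are closed under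
  differentiation: the derivative has the same shape with m + 1 and numerator
  quot_step w m c q.\<close>

definition quot_step :: "complex poly \<Rightarrow> nat \<Rightarrow> complex \<Rightarrow> complex poly \<Rightarrow> complex poly" where
  "quot_step w m c q =
     (pCons 0 (pderiv q) + smult c q) * w - smult (of_nat m) (pCons 0 (pderiv w)) * q"

lemma has_field_derivative_exp_quotient:
  assumes "poly w (exp y) \<noteq> 0"
  shows "((\<lambda>y. poly q (exp y) / poly w (exp y) ^ m * exp (y * c)) has_field_derivative
     poly (quot_step w m c q) (exp y) / poly w (exp y) ^ Suc m * exp (y * c)) (at y)"
  apply (rule derivative_eq_intros refl | simp add: assms)+
  using assms by (cases m) (simp_all add: quot_step_def field_simps)

text \<open>Numerator of the j-th derivative of q(e^y)/w(e^y) e^{cy}.\<close>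

primrec quot_numer :: "complex poly \<Rightarrow> complex \<Rightarrow> complex poly \<Rightarrow> nat \<Rightarrow> complex poly" where
  "quot_numer w c q 0 = q"
| "quot_numer w c q (Suc j) = quot_step w (Suc j) c (quot_numer w c q j)"

definition exp_quotient :: "complex poly \<Rightarrow> complex poly \<Rightarrow> complex \<Rightarrow> nat \<Rightarrow> complex \<Rightarrow> complex" where
  "exp_quotient w q c j y = poly (quot_numer w c q j) (exp y) / poly w (exp y) ^ Suc j * exp (y * c)"

lemma exp_quotient_has_derivative:
  "poly w (exp y) \<noteq> 0 \<Longrightarrow>
     (exp_quotient w q c j has_field_derivative exp_quotient w q c (Suc j) y) (at y)"
  unfolding exp_quotient_def
  using has_field_derivative_exp_quotient[of w y "quot_numer w c q j" "Suc j" c] by simp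

lemma open_nonvanishing_exp: "open {y. poly w (exp y) \<noteq> (0::complex)}"
  by (rule open_Collect_neq) (auto intro!: continuous_intros)

lemma exp_quotient_chain_unique:
  assumes chain: "\<And>j y. poly w (exp y) \<noteq> 0 \<Longrightarrow> (F j has_field_derivative F (Suc j) y) (at y)"
    and start: "\<And>y. poly w (exp y) \<noteq> 0 \<Longrightarrow> F 0 y = exp_quotient w q c 0 y"
    and y: "poly w (exp y) \<noteq> 0"
  shows "F j y = exp_quotient w q c j y"
proof -
  have "(deriv ^^ j) (exp_quotient w q c 0) y = exp_quotient w q c j y"
    by (rule deriv_iterate_eqI[OF open_nonvanishing_exp])
       (use y exp_quotient_has_derivative in auto)
  moreover have "(deriv ^^ j) (exp_quotient w q c 0) y = F j y"
    by (rule deriv_iterate_eqI[OF open_nonvanishing_exp]) (use chain start y in auto)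
  ultimately show ?thesis by simp
qed

lemma quot_step_diff: "quot_step w m c (p - q) = quot_step w m c p - quot_step w m c q"
  unfolding quot_step_def pderiv_diff by (simp add: algebra_simps smult_diff_right)

lemma quot_numer_diff: "quot_numer w c (p - q) j = quot_numer w c p j - quot_numer w c q j"
  by (induction j) (simp_all add: quot_step_diff)

lemma exp_quotient_diff:
  "exp_quotient w (p - q) c j y = exp_quotient w p c j y - exp_quotient w q c j y"
  unfolding exp_quotient_def quot_numer_diff by (simp add: diff_divide_distrib left_diff_distrib)

lemma exp_quotient_self:
  assumes "poly w (exp y) \<noteq> 0"
  shows "exp_quotient w w c j y = c ^ j * exp (y * c)"
  by (rule sym, rule exp_quotient_chain_unique[where F = "\<lambda>j y. c ^ j * exp (y * c)"])
     (use assms in \<open>auto intro!: derivative_eq_intros simp: exp_quotient_def\<close>)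

text \<open>Applying Q = sum q_j(e^x) d^j to T(e^y)/w(e^y) e^{cy} gives
  clear_denom Q w c T (e^y) / w(e^y)^(ord Q + 1) e^{cy}; this polynomial is the
  numerator with all denominators cleared.\<close>

definition clear_denom :: "dop \<Rightarrow> complex poly \<Rightarrow> complex \<Rightarrow> complex poly \<Rightarrow> complex poly" where
  "clear_denom Q w c T = (\<Sum>j\<le>degree Q. coeff Q j * (quot_numer w c T j * w ^ (degree Q - j)))"

lemma dop_sum_exp_quotient:
  assumes "poly w (exp y) \<noteq> 0"
  shows "(\<Sum>j\<le>degree Q. poly (coeff Q j) (exp y) * exp_quotient w T c j y) =
     poly (clear_denom Q w c T) (exp y) / poly w (exp y) ^ Suc (degree Q) * exp (y * c)"
proof -
  have "poly (coeff Q j) (exp y) * exp_quotient w T c j y =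
    poly (coeff Q j) (exp y) * (poly (quot_numer w c T j) (exp y) * poly w (exp y) ^ (degree Q - j))
      / poly w (exp y) ^ Suc (degree Q) * exp (y * c)"
    if j: "j \<le> degree Q" for j
  proof -
    have "poly w (exp y) ^ Suc (degree Q) = poly w (exp y) ^ Suc j * poly w (exp y) ^ (degree Q - j)"
      using j by (simp flip: power_add)
    then show ?thesis unfolding exp_quotient_def using assms by (simp add: field_simps)
  qed
  then show ?thesis
    unfolding clear_denom_def poly_sum poly_mult poly_power sum_distrib_right sum_divide_distrib
    by (intro sum.cong refl) simp
qed

lemma coeff_mult_at_bounds:
  fixes p q :: "'a::comm_semiring_1 poly"
  assumes p: "degree p \<le> m" and q: "degree q \<le> n"
  shows "coeff (p * q) (m + n) = coeff p m * coeff q n"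
proof (cases "degree p = m \<and> degree q = n")
  case True
  then show ?thesis using coeff_mult_degree_sum[of p q] by simp
next
  case False
  then have "degree (p * q) < m + n" using degree_mult_le[of p q] p q by linarith
  moreover have "coeff p m = 0 \<or> coeff q n = 0"
    using False p q by (auto intro: coeff_eq_0)
  ultimately show ?thesis by (auto simp: coeff_eq_0)
qed

text \<open>Leading-term bookkeeping: one differentiation step raises the degree of the
  numerator by at most deg w and multiplies the coefficient at the top by an
  explicit linear factor (the "indicial" factor at u = \<infinity>).\<close>

lemma quot_step_top_coeff:
  fixes q w :: "complex poly"
  assumes "degree q \<le> n"
  shows "degree (quot_step w m c q) \<le> n + degree w \<and>
    coeff (quot_step w m c q) (n + degree w) =
      coeff q n * lead_coeff w * (of_nat n + c - of_nat m * of_nat (degree w))"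
proof -
  define A where "A = pCons 0 (pderiv q) + smult c q"
  define B where "B = pCons 0 (pderiv w)"
  have degree_euler: "degree (pCons 0 (pderiv p)) \<le> degree p" for p :: "complex poly"
  proof (cases "pderiv p = 0")
    case False
    then have "degree p \<noteq> 0" using pderiv_eq_0_iff by blast
    then show ?thesis using False by (simp add: degree_pderiv)
  qed simp
  have coeff_euler: "coeff (pCons 0 (pderiv p)) k = of_nat k * coeff p k" for p :: "complex poly" and k
    by (cases k) (simp_all add: coeff_pderiv)
  have dA: "degree A \<le> n" unfolding A_def
    using degree_euler[of q] assms by (intro degree_add_le) (auto intro: order.trans[OF degree_smult_le])
  have cA: "coeff A n = (of_nat n + c) * coeff q n"
    unfolding A_def by (simp add: coeff_euler algebra_simps)
  have dB: "degree B \<le> degree w" unfolding B_def by (rule degree_euler)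
  have cB: "coeff B (degree w) = of_nat (degree w) * lead_coeff w"
    unfolding B_def by (simp add: coeff_euler)
  have eq: "quot_step w m c q = A * w - smult (of_nat m) (B * q)"
    unfolding quot_step_def A_def B_def by simp
  have "degree (A * w) \<le> n + degree w"
    using dA by (meson add_le_mono degree_mult_le order.trans order_refl)
  moreover have "degree (B * q) \<le> n + degree w"
    using dB assms by (metis add.commute add_le_mono degree_mult_le order.trans)
  ultimately have "degree (quot_step w m c q) \<le> n + degree w"
    unfolding eq by (intro degree_diff_le) (auto intro: order.trans[OF degree_smult_le])
  moreover have "coeff (quot_step w m c q) (n + degree w) =
      coeff q n * lead_coeff w * (of_nat n + c - of_nat m * of_nat (degree w))"
    unfolding eq using coeff_mult_at_bounds[OF dA order_refl, of w] coeff_mult_at_bounds[OF dB assms]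
    by (simp add: cA cB add.commute algebra_simps)
  ultimately show ?thesis by blast
qed

lemma quot_numer_top_coeff:
  "degree (quot_numer w c T j) \<le> degree T + j * degree w \<and>
   coeff (quot_numer w c T j) (degree T + j * degree w) =
     lead_coeff T * (lead_coeff w * (of_nat (degree T) - of_nat (degree w) + c)) ^ j"
proof (induction j)
  case 0
  then show ?case by simp
next
  case (Suc j)
  have "degree T + Suc j * degree w = (degree T + j * degree w) + degree w" by simp
  with quot_step_top_coeff[of "quot_numer w c T j" "degree T + j * degree w" w "Suc j" c] Suc.IH
  show ?case by (simp add: algebra_simps)
qed

text \<open>The largest degree in e^x among the coefficients of an operator, and the
  indicial polynomial of the operator at e^x = \<infinity>: the part of the
  coefficients of that top degree, with d replaced by the variable s.\<close>

definition max_coeff_degree :: "dop \<Rightarrow> nat" where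
  "max_coeff_degree Q = Max ((\<lambda>j. degree (coeff Q j)) ` {..degree Q})"

definition indicial :: "dop \<Rightarrow> complex poly" where
  "indicial Q = (\<Sum>j\<le>degree Q. monom (coeff (coeff Q j) (max_coeff_degree Q)) j)"

lemma degree_coeff_le_max: "j \<le> degree Q \<Longrightarrow> degree (coeff Q j) \<le> max_coeff_degree Q"
  unfolding max_coeff_degree_def by auto

lemma degree_exp_symbol_le: "degree (exp_symbol A c) \<le> max_coeff_degree A"
  unfolding exp_symbol_def
  by (intro degree_sum_le) (auto intro: order.trans[OF degree_smult_le] degree_coeff_le_max)

lemma poly_indicial:
  "poly (indicial Q) s = (\<Sum>j\<le>degree Q. coeff (coeff Q j) (max_coeff_degree Q) * s ^ j)"
  unfolding indicial_def by (simp add: poly_sum poly_monom)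

lemma indicial_nonzero:
  assumes "Q \<noteq> 0"
  shows "indicial Q \<noteq> 0"
proof -
  let ?M = "max_coeff_degree Q"
  have "?M \<in> (\<lambda>j. degree (coeff Q j)) ` {..degree Q}"
    unfolding max_coeff_degree_def by (intro Max_in) auto
  then obtain j0 where j0: "j0 \<le> degree Q" "degree (coeff Q j0) = ?M" by auto
  have "\<exists>k\<le>degree Q. coeff (coeff Q k) ?M \<noteq> 0"
  proof (cases "coeff Q j0 = 0")
    case False
    then show ?thesis using j0 by (intro exI[of _ j0]) (auto simp flip: j0(2))
  next
    case True
    then have M0: "?M = 0" using j0 by simp
    then have "degree (coeff Q (degree Q)) = 0"
      using degree_coeff_le_max[of "degree Q" Q] by simp
    then have "coeff (coeff Q (degree Q)) ?M \<noteq> 0"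
      using assms M0 leading_coeff_0_iff[of "coeff Q (degree Q)"] by simp
    then show ?thesis by blast
  qed
  then obtain k where "k \<le> degree Q" "coeff (coeff Q k) ?M \<noteq> 0" by blast
  then have "coeff (indicial Q) k \<noteq> 0" unfolding indicial_def coeff_sum by simp
  then show ?thesis by auto
qed

text \<open>If Q annihilates T(e^y)/w(e^y) e^{cy} and the exponent of
  this function at e^x = \<infinity>, namely deg T - deg w + c, is not a root of the
  indicial polynomial, then T = 0: otherwise the coefficient of the cleared
  numerator in the top degree would be lead T (lead w)^(ord Q) times the nonzero
  indicial value.\<close>

lemma clear_denom_eq_0_imp:
  fixes Q :: dop and w T :: "complex poly"
  assumes w: "w \<noteq> 0"
    and ind: "poly (indicial Q) (of_nat (degree T) - of_nat (degree w) + c) \<noteq> 0"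
    and N: "clear_denom Q w c T = 0"
  shows "T = 0"
proof (rule ccontr)
  assume T: "T \<noteq> 0"
  define d where "d = degree Q"
  define M where "M = max_coeff_degree Q"
  define s where "s = of_nat (degree T) - of_nat (degree w) + c"
  define K where "K = degree T + d * degree w"
  have top: "coeff (coeff Q j * (quot_numer w c T j * w ^ (d - j))) (M + K) =
      coeff (coeff Q j) M * (lead_coeff T * lead_coeff w ^ d * s ^ j)" if j: "j \<le> d" for j
  proof -
    have K: "K = (degree T + j * degree w) + (d - j) * degree w"
      using j unfolding K_def by (simp add: add_mult_distrib[symmetric])
    have dw: "degree (w ^ (d - j)) \<le> (d - j) * degree w"
      using degree_power_eq[OF w] by simp
    have cw: "coeff (w ^ (d - j)) ((d - j) * degree w) = lead_coeff w ^ (d - j)"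
      using degree_power_eq[OF w, of "d - j"] lead_coeff_power[of w "d - j"] by simp
    have dN: "degree (quot_numer w c T j * w ^ (d - j)) \<le> K"
      unfolding K using quot_numer_top_coeff[of w c T j] dw
      by (meson add_le_mono degree_mult_le order.trans)
    have "coeff (quot_numer w c T j * w ^ (d - j)) K =
        coeff (quot_numer w c T j) (degree T + j * degree w) * lead_coeff w ^ (d - j)"
      unfolding K using coeff_mult_at_bounds[OF conjunct1[OF quot_numer_top_coeff] dw] cw by simp
    also have "\<dots> = lead_coeff T * lead_coeff w ^ d * s ^ j"
      using quot_numer_top_coeff[of w c T j] j unfolding s_def
      by (simp add: power_mult_distrib mult_ac flip: power_add)
    finally have "coeff (quot_numer w c T j * w ^ (d - j)) K = lead_coeff T * lead_coeff w ^ d * s ^ j" .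
    moreover have "degree (coeff Q j) \<le> M"
      using degree_coeff_le_max j unfolding d_def M_def by blast
    ultimately show ?thesis using coeff_mult_at_bounds[OF _ dN] by simp
  qed
  have "0 = coeff (clear_denom Q w c T) (M + K)" using N by simp
  also have "\<dots> = lead_coeff T * lead_coeff w ^ d * (\<Sum>j\<le>d. coeff (coeff Q j) M * s ^ j)"
    unfolding clear_denom_def coeff_sum d_def[symmetric] using top
    by (simp add: sum_distrib_left mult_ac)
  also have "\<dots> = lead_coeff T * lead_coeff w ^ d * poly (indicial Q) s"
    unfolding poly_indicial d_def M_def ..
  finally show False using T w ind unfolding s_def by simp
qed

lemma poly_eq_0_on_exp:
  fixes N w :: "complex poly"
  assumes w: "w \<noteq> 0" and N: "\<And>y. poly w (exp y) \<noteq> 0 \<Longrightarrow> poly N (exp y) = 0"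
  shows "N = 0"
proof (rule ccontr)
  assume N0: "N \<noteq> 0"
  have "range (\<lambda>t::real. complex_of_real (exp t)) \<subseteq> {u. poly N u = 0} \<union> {u. poly w u = 0}"
    using N by (auto simp flip: exp_of_real)
  moreover have "finite ({u. poly N u = 0} \<union> {u. poly w u = 0})"
    using poly_roots_finite[OF N0] poly_roots_finite[OF w] by simp
  moreover have "inj (\<lambda>t::real. complex_of_real (exp t))" by (auto simp: inj_def)
  then have "infinite (range (\<lambda>t::real. complex_of_real (exp t)))"
    using finite_imageD infinite_UNIV_char_0 by blast
  ultimately show False using finite_subset by blast
qed

locale trig_darboux =
  fixes f g \<theta> \<nu> :: "complex poly" and Pbar Qbar :: dop
    and \<psi> :: "complex \<Rightarrow> complex \<Rightarrow> complex"
  assumes theta_nz: "\<theta> \<noteq> 0" and nu_nz: "\<nu> \<noteq> 0"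
    and Q_lead: "coeff Qbar (degree Qbar) = \<nu>"
    and psi_def: "\<And>x z. poly \<theta> (exp x) \<noteq> 0 \<Longrightarrow> poly f z \<noteq> 0 \<Longrightarrow>
        \<psi> x z = (1 / poly f z) * left_rat_apply \<theta> Pbar (\<lambda>y. exp (y * z)) x"
    and inverse: "\<And>x z. poly \<theta> (exp x) \<noteq> 0 \<Longrightarrow> poly \<nu> (exp x) \<noteq> 0 \<Longrightarrow>
        poly f z \<noteq> 0 \<Longrightarrow> poly g z \<noteq> 0 \<Longrightarrow>
        exp (x * z) = (1 / poly g z) * right_rat_apply Qbar \<nu> (\<lambda>y. \<psi> y z) x"
begin

abbreviation den :: "complex poly" where "den \<equiv> \<theta> * \<nu>"

lemma den_nonzero: "den \<noteq> 0"
  using theta_nz nu_nz by simp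

lemma Qbar_nonzero: "Qbar \<noteq> 0"
  using Q_lead nu_nz by auto

lemma psi_exp_form:
  assumes "poly \<theta> (exp y) \<noteq> 0" "poly f c \<noteq> 0"
  shows "\<psi> y c = poly (exp_symbol Pbar c) (exp y) * exp (y * c) / (poly f c * poly \<theta> (exp y))"
  using psi_def[OF assms] by (simp add: left_rat_apply_def dop_apply_exp)

lemma psi_bop_form:
  assumes "poly \<theta> (exp x) \<noteq> 0" "poly f z \<noteq> 0"
  shows "\<psi> x z = (1 / poly \<theta> (exp x)) * (1 / poly f z) * bop_apply Pbar (\<lambda>w. exp (x * w)) z"
  using psi_exp_form[OF assms] by (simp add: bop_apply_exp)

lemma Qbar_exp_quotient:
  assumes y: "poly den (exp y) \<noteq> 0" and c: "poly f c \<noteq> 0" "poly g c \<noteq> 0"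
  shows "(\<Sum>j\<le>degree Qbar. poly (coeff Qbar j) (exp y) * exp_quotient den (exp_symbol Pbar c) c j y)
     = poly f c * poly g c * exp (y * c)"
proof -
  define F where "F j t = exp_quotient den (exp_symbol Pbar c) c j t / poly f c" for j t
  have derivs: "(deriv ^^ j) (\<lambda>t. \<psi> t c / poly \<nu> (exp t)) y = F j y" for j
  proof (rule deriv_iterate_eqI[OF open_nonvanishing_exp[of den], of F])
    show "(F j has_field_derivative F (Suc j) t) (at t)" if "t \<in> {t. poly den (exp t) \<noteq> 0}" for j t
      unfolding F_def[abs_def] using that exp_quotient_has_derivative
      by (auto intro!: DERIV_cdivide)
    show "\<psi> t c / poly \<nu> (exp t) = F 0 t" if "t \<in> {t. poly den (exp t) \<noteq> 0}" for t
      using that psi_exp_form[of t c] c unfolding F_def exp_quotient_def by (simp add: field_simps)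
  qed (use y in auto)
  have "exp (y * c) = (1 / poly g c) * right_rat_apply Qbar \<nu> (\<lambda>t. \<psi> t c) y"
    using inverse[of y c] y c by simp
  also have "\<dots> = (1 / poly g c) * (\<Sum>j\<le>degree Qbar. poly (coeff Qbar j) (exp y) * F j y)"
    unfolding right_rat_apply_def dop_apply_def derivs ..
  also have "\<dots> = (\<Sum>j\<le>degree Qbar. poly (coeff Qbar j) (exp y) * exp_quotient den (exp_symbol Pbar c) c j y)
      / (poly g c * poly f c)"
    unfolding F_def by (simp add: sum_distrib_left sum_divide_distrib field_simps)
  finally show ?thesis using c by (simp add: field_simps)
qed

text \<open>b(Qbar) (1/g) psi is e^{xz}/theta(e^x) times a polynomial in e^x, the shifted
  symbol: sum over the terms q_ji z^j T^i of q_ji z^j / (f g)(z+i) u^i P(z+i)(u).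
  The second identity of the theorem says that this polynomial is theta nu.\<close>

definition shift_weight :: "complex \<Rightarrow> nat \<Rightarrow> nat \<Rightarrow> complex" where
  "shift_weight z j i = coeff (coeff Qbar j) i * z ^ j / (poly f (z + of_nat i) * poly g (z + of_nat i))"

definition shifted_symbol :: "complex \<Rightarrow> complex poly" where
  "shifted_symbol z = (\<Sum>j\<le>degree Qbar. \<Sum>i\<le>degree (coeff Qbar j).
      smult (shift_weight z j i) (monom 1 i * exp_symbol Pbar (z + of_nat i)))"

lemma poly_shifted_symbol:
  "poly (shifted_symbol z) u = (\<Sum>j\<le>degree Qbar. \<Sum>i\<le>degree (coeff Qbar j).
     shift_weight z j i * (u ^ i * poly (exp_symbol Pbar (z + of_nat i)) u))"
  by (simp add: shifted_symbol_def poly_sum poly_monom)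

lemma bop_Qbar_psi:
  assumes t: "poly \<theta> (exp x) \<noteq> 0"
    and nz: "\<forall>k::nat. poly f (z + of_nat k) \<noteq> 0 \<and> poly g (z + of_nat k) \<noteq> 0"
  shows "bop_apply Qbar (\<lambda>w. (1 / poly g w) * \<psi> x w) z =
     exp (x * z) / poly \<theta> (exp x) * poly (shifted_symbol z) (exp x)"
proof -
  have "coeff (coeff Qbar j) i * z ^ j * (1 / poly g (z + of_nat i) * \<psi> x (z + of_nat i)) =
      exp (x * z) / poly \<theta> (exp x) *
        (shift_weight z j i * (exp x ^ i * poly (exp_symbol Pbar (z + of_nat i)) (exp x)))" for j i
  proof -
    have "\<psi> x (z + of_nat i) = poly (exp_symbol Pbar (z + of_nat i)) (exp x) * (exp (x * z) * exp x ^ i)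
        / (poly f (z + of_nat i) * poly \<theta> (exp x))"
      using psi_exp_form[of x "z + of_nat i"] t nz by (simp add: exp_mult_shift)
    then show ?thesis using t nz by (simp add: shift_weight_def field_simps)
  qed
  then show ?thesis
    unfolding bop_apply_def poly_shifted_symbol sum_distrib_left by simp
qed

lemma exp_quotient_shifted_symbol:
  assumes y: "poly den (exp y) \<noteq> 0"
  shows "exp_quotient den (shifted_symbol z) z k y = (\<Sum>j\<le>degree Qbar. \<Sum>i\<le>degree (coeff Qbar j).
      shift_weight z j i * exp_quotient den (exp_symbol Pbar (z + of_nat i)) (z + of_nat i) k y)"
proof (rule sym, rule exp_quotient_chain_unique[OF _ _ y])
  show "((\<lambda>y. \<Sum>j\<le>degree Qbar. \<Sum>i\<le>degree (coeff Qbar j).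
      shift_weight z j i * exp_quotient den (exp_symbol Pbar (z + of_nat i)) (z + of_nat i) k y)
      has_field_derivative (\<Sum>j\<le>degree Qbar. \<Sum>i\<le>degree (coeff Qbar j).
      shift_weight z j i * exp_quotient den (exp_symbol Pbar (z + of_nat i)) (z + of_nat i) (Suc k) t)) (at t)"
    if "poly den (exp t) \<noteq> 0" for k t
    using that by (intro DERIV_sum DERIV_cmult exp_quotient_has_derivative)
  show "(\<Sum>j\<le>degree Qbar. \<Sum>i\<le>degree (coeff Qbar j).
      shift_weight z j i * exp_quotient den (exp_symbol Pbar (z + of_nat i)) (z + of_nat i) 0 t)
      = exp_quotient den (shifted_symbol z) z 0 t" for t
    by (simp add: exp_quotient_def poly_shifted_symbol exp_mult_shift
        sum_distrib_left sum_distrib_right sum_divide_distrib mult_ac)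
qed

text \<open>Qbar sends S_z(e^y)/(theta nu)(e^y) e^{yz} to Qbar e^{yz}: apply
  Qbar_exp_quotient to each shifted term and recombine the result as
  b(Qbar) e^{yz} = Qbar e^{yz}.\<close>

lemma Qbar_exp_quotient_shifted_symbol:
  assumes y: "poly den (exp y) \<noteq> 0"
    and nz: "\<forall>i\<le>max_coeff_degree Qbar. poly f (z + of_nat i) \<noteq> 0 \<and> poly g (z + of_nat i) \<noteq> 0"
  shows "(\<Sum>k\<le>degree Qbar. poly (coeff Qbar k) (exp y) * exp_quotient den (shifted_symbol z) z k y)
     = (\<Sum>k\<le>degree Qbar. poly (coeff Qbar k) (exp y) * (z ^ k * exp (y * z)))"
proof -
  let ?E = "\<lambda>i k. exp_quotient den (exp_symbol Pbar (z + of_nat i)) (z + of_nat i) k y"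
  have "(\<Sum>k\<le>degree Qbar. poly (coeff Qbar k) (exp y) * exp_quotient den (shifted_symbol z) z k y)
      = (\<Sum>j\<le>degree Qbar. \<Sum>i\<le>degree (coeff Qbar j).
          shift_weight z j i * (\<Sum>k\<le>degree Qbar. poly (coeff Qbar k) (exp y) * ?E i k))"
    unfolding exp_quotient_shifted_symbol[OF y] sum_distrib_left
    by (subst sum.swap, rule sum.cong, simp, subst sum.swap) (simp add: mult_ac)
  also have "\<dots> = (\<Sum>j\<le>degree Qbar. \<Sum>i\<le>degree (coeff Qbar j).
      coeff (coeff Qbar j) i * z ^ j * exp (y * (z + of_nat i)))"
  proof (intro sum.cong refl)
    fix j i assume "j \<in> {..degree Qbar}" "i \<in> {..degree (coeff Qbar j)}"
    then have "i \<le> max_coeff_degree Qbar" using degree_coeff_le_max[of j Qbar] by simp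
    then show "shift_weight z j i * (\<Sum>k\<le>degree Qbar. poly (coeff Qbar k) (exp y) * ?E i k)
        = coeff (coeff Qbar j) i * z ^ j * exp (y * (z + of_nat i))"
      using Qbar_exp_quotient[OF y, of "z + of_nat i"] nz by (simp add: shift_weight_def)
  qed
  also have "\<dots> = bop_apply Qbar (\<lambda>w. exp (y * w)) z"
    unfolding bop_apply_def ..
  also have "\<dots> = (\<Sum>k\<le>degree Qbar. poly (coeff Qbar k) (exp y) * (z ^ k * exp (y * z)))"
    unfolding bop_apply_exp poly_exp_symbol sum_distrib_right by (simp only: mult_ac)
  finally show ?thesis .
qed

definition degree_bound :: nat where
  "degree_bound = max_coeff_degree Qbar + max_coeff_degree Pbar + degree den"

lemma degree_shifted_symbol_diff_le: "degree (shifted_symbol z - den) \<le> degree_bound"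
proof -
  have "degree (smult (shift_weight z j i) (monom 1 i * exp_symbol Pbar (z + of_nat i)))
      \<le> max_coeff_degree Qbar + max_coeff_degree Pbar"
    if "j \<le> degree Qbar" "i \<le> degree (coeff Qbar j)" for j i
  proof -
    have "degree (smult (shift_weight z j i) (monom 1 i * exp_symbol Pbar (z + of_nat i)))
        \<le> degree (monom (1::complex) i) + degree (exp_symbol Pbar (z + of_nat i))"
      using degree_smult_le degree_mult_le order.trans by blast
    also have "\<dots> \<le> i + max_coeff_degree Pbar"
      by (simp add: degree_monom_eq degree_exp_symbol_le)
    also have "i \<le> max_coeff_degree Qbar"
      using that(2) degree_coeff_le_max[OF that(1)] by (rule le_trans)
    finally show ?thesis by simp
  qed
  then have "degree (shifted_symbol z) \<le> max_coeff_degree Qbar + max_coeff_degree Pbar"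
    unfolding shifted_symbol_def by (intro degree_sum_le) auto
  then show ?thesis
    unfolding degree_bound_def using degree_diff_le_max[of "shifted_symbol z" den] by linarith
qed

text \<open>The finitely many z for which deg (S_z - theta nu) - deg (theta nu) + z could be
  a root of the indicial polynomial of Qbar.\<close>

definition exceptional_points :: "complex set" where
  "exceptional_points = (\<lambda>(r, m). r - of_nat m + of_nat (degree den)) `
     ({r. poly (indicial Qbar) r = 0} \<times> {..degree_bound})"

lemma finite_exceptional_points: "finite exceptional_points"
  unfolding exceptional_points_def
  using poly_roots_finite[OF indicial_nonzero[OF Qbar_nonzero]] by simp

text \<open>For generic z: Qbar kills (S_z - theta nu)(e^y)/(theta nu)(e^y) e^{yz}, hence
  S_z = theta nu by the indicial argument.\<close>

lemma shifted_symbol_generic: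
  assumes nz: "\<forall>i\<le>max_coeff_degree Qbar. poly f (z + of_nat i) \<noteq> 0 \<and> poly g (z + of_nat i) \<noteq> 0"
    and z: "z \<notin> exceptional_points"
  shows "shifted_symbol z = den"
proof -
  define T where "T = shifted_symbol z - den"
  have "clear_denom Qbar den z T = 0"
  proof (rule poly_eq_0_on_exp[OF den_nonzero])
    fix y assume y: "poly den (exp y) \<noteq> 0"
    have "(\<Sum>k\<le>degree Qbar. poly (coeff Qbar k) (exp y) * exp_quotient den T z k y) = 0"
      using Qbar_exp_quotient_shifted_symbol[OF y nz]
      unfolding T_def exp_quotient_diff exp_quotient_self[OF y]
      by (simp add: right_diff_distrib sum_subtractf)
    then show "poly (clear_denom Qbar den z T) (exp y) = 0"
      using dop_sum_exp_quotient[OF y, of Qbar T z] y by simp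
  qed
  moreover have "poly (indicial Qbar) (of_nat (degree T) - of_nat (degree den) + z) \<noteq> 0"
  proof
    let ?r = "of_nat (degree T) - of_nat (degree den) + z"
    assume "poly (indicial Qbar) ?r = 0"
    then have "(?r, degree T) \<in> {r. poly (indicial Qbar) r = 0} \<times> {..degree_bound}"
      using degree_shifted_symbol_diff_le unfolding T_def by auto
    moreover have "z = (\<lambda>(r, m). r - of_nat m + of_nat (degree den)) (?r, degree T)"
      by simp
    ultimately have "z \<in> exceptional_points"
      unfolding exceptional_points_def by (blast intro: image_eqI)
    with z show False by simp
  qed
  ultimately have "T = 0"
    by (rule clear_denom_eq_0_imp[OF den_nonzero, rotated])
  then show ?thesis unfolding T_def by simp
qed

text \<open>S_z = theta nu wherever the shifted symbol is defined: it holds outside a finite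
  set, and the coefficients of S_z depend continuously on z.\<close>

lemma shifted_symbol_eq_den:
  assumes nz: "\<forall>k::nat. poly f (z0 + of_nat k) \<noteq> 0 \<and> poly g (z0 + of_nat k) \<noteq> 0"
  shows "shifted_symbol z0 = den"
proof -
  have shift_nonzero: "eventually (\<lambda>z. poly f (z + of_nat i) \<noteq> 0 \<and> poly g (z + of_nat i) \<noteq> 0) (at z0)"
    for i :: nat
  proof -
    have "eventually (\<lambda>z. poly f (z + of_nat i) \<noteq> 0) (at z0)"
      by (rule tendsto_imp_eventually_ne[OF isContD]) (use nz in \<open>auto intro!: continuous_intros\<close>)
    moreover have "eventually (\<lambda>z. poly g (z + of_nat i) \<noteq> 0) (at z0)"
      by (rule tendsto_imp_eventually_ne[OF isContD]) (use nz in \<open>auto intro!: continuous_intros\<close>)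
    ultimately show ?thesis by (rule eventually_conj)
  qed
  have near: "eventually (\<lambda>z. shifted_symbol z = den) (at z0)"
  proof -
    have "eventually (\<lambda>z. \<forall>i\<in>{..max_coeff_degree Qbar}. poly f (z + of_nat i) \<noteq> 0 \<and> poly g (z + of_nat i) \<noteq> 0) (at z0)"
      using shift_nonzero by (intro eventually_ball_finite) auto
    moreover have "eventually (\<lambda>z. \<forall>b\<in>exceptional_points. z \<noteq> b) (at z0)"
      using finite_exceptional_points by (intro eventually_ball_finite) (auto intro: eventually_neq_at_within)
    ultimately show ?thesis
      by eventually_elim (rule shifted_symbol_generic; auto)
  qed
  have "poly (shifted_symbol z0) u = poly den u" for u
  proof -
    have "isCont (\<lambda>z. poly (shifted_symbol z) u) z0"
      unfolding poly_shifted_symbol shift_weight_def poly_exp_symbol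
      using nz by (intro continuous_intros) auto
    then have "((\<lambda>z. poly (shifted_symbol z) u) \<longlongrightarrow> poly (shifted_symbol z0) u) (at z0)"
      by (rule isContD)
    moreover have "eventually (\<lambda>z. poly (shifted_symbol z) u = poly den u) (at z0)"
      using near by eventually_elim simp
    ultimately have "((\<lambda>z. poly den u) \<longlongrightarrow> poly (shifted_symbol z0) u) (at z0)"
      by (rule Lim_transform_eventually)
    then show ?thesis using tendsto_unique[OF at_neq_bot _ tendsto_const] by metis
  qed
  then show ?thesis by (simp add: poly_eq_poly_eq_iff[symmetric] fun_eq_iff)
qed

lemma exp_bop_form:
  assumes t: "poly \<theta> (exp x) \<noteq> 0" and n: "poly \<nu> (exp x) \<noteq> 0"
    and nz: "\<forall>k::nat. poly f (z + of_nat k) \<noteq> 0 \<and> poly g (z + of_nat k) \<noteq> 0"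
  shows "exp (x * z) = (1 / poly \<nu> (exp x)) * bop_apply Qbar (\<lambda>w. (1 / poly g w) * \<psi> x w) z"
  using bop_Qbar_psi[OF t nz] shifted_symbol_eq_den[OF nz] t n by simp

text \<open>The difference equation in z, obtained by applying b(Pbar) to the second identity
  and using the first.\<close>

lemma difference_equation:
  assumes t: "poly \<theta> (exp x) \<noteq> 0" and n: "poly \<nu> (exp x) \<noteq> 0"
    and nz: "\<forall>k::nat. poly f (z + of_nat k) \<noteq> 0 \<and> poly g (z + of_nat k) \<noteq> 0"
  shows "(1 / poly f z) * bop_apply Pbar (bop_apply Qbar (\<lambda>w. (1 / poly g w) * \<psi> x w)) z
        = poly \<theta> (exp x) * poly \<nu> (exp x) * \<psi> x z"
proof -
  have fz: "poly f z \<noteq> 0" using nz[rule_format, of 0] by simp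
  have shifted: "bop_apply Qbar (\<lambda>w. (1 / poly g w) * \<psi> x w) (z + of_nat i)
      = poly \<nu> (exp x) * exp (x * (z + of_nat i))" for i
  proof -
    have "\<forall>k::nat. poly f (z + of_nat i + of_nat k) \<noteq> 0 \<and> poly g (z + of_nat i + of_nat k) \<noteq> 0"
      using nz by (metis add.assoc of_nat_add)
    from exp_bop_form[OF t n this] n show ?thesis by (simp add: field_simps)
  qed
  have "bop_apply Pbar (bop_apply Qbar (\<lambda>w. (1 / poly g w) * \<psi> x w)) z
      = poly \<nu> (exp x) * bop_apply Pbar (\<lambda>w. exp (x * w)) z"
    unfolding bop_apply_def[of Pbar] shifted by (simp add: sum_distrib_left mult_ac)
  also have "\<dots> = poly \<nu> (exp x) * (poly \<theta> (exp x) * poly f z * \<psi> x z)"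
    using psi_bop_form[OF t fz] t fz by (simp add: field_simps)
  finally show ?thesis using fz by (simp add: field_simps)
qed

text \<open>The differential equation P Q psi = f g psi in x: Q psi = g e^{xz} near x, and
  P e^{xz} = f psi.\<close>

lemma differential_equation:
  assumes t: "poly \<theta> (exp x) \<noteq> 0" and n: "poly \<nu> (exp x) \<noteq> 0"
    and fz: "poly f z \<noteq> 0" and gz: "poly g z \<noteq> 0"
  shows "left_rat_apply \<theta> Pbar (right_rat_apply Qbar \<nu> (\<lambda>y. \<psi> y z)) x = poly f z * poly g z * \<psi> x z"
proof -
  have derivs: "(deriv ^^ j) (right_rat_apply Qbar \<nu> (\<lambda>y. \<psi> y z)) x = poly g z * (z ^ j * exp (x * z))"
    for j
  proof (rule deriv_iterate_eqI[OF open_nonvanishing_exp[of den]])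
    show "((\<lambda>y. poly g z * (z ^ j * exp (y * z))) has_field_derivative
        poly g z * (z ^ Suc j * exp (y * z))) (at y)" for j y
      by (auto intro!: derivative_eq_intros)
    show "right_rat_apply Qbar \<nu> (\<lambda>y. \<psi> y z) y = poly g z * (z ^ 0 * exp (y * z))"
      if "y \<in> {y. poly den (exp y) \<noteq> 0}" for y
      using inverse[of y z] that fz gz by (simp add: field_simps)
  qed (use t n in auto)
  have "left_rat_apply \<theta> Pbar (right_rat_apply Qbar \<nu> (\<lambda>y. \<psi> y z)) x
      = poly g z * (dop_apply Pbar (\<lambda>y. exp (y * z)) x / poly \<theta> (exp x))"
    unfolding left_rat_apply_def dop_apply_def derivs deriv_iterate_exp
    by (simp add: sum_distrib_left sum_divide_distrib mult_ac)
  also have "\<dots> = poly g z * poly f z * \<psi> x z"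
    using psi_def[OF t fz] fz by (simp add: left_rat_apply_def)
  finally show ?thesis by simp
qed

end

theorem proposition4p1:
  fixes f g \<theta> \<nu> :: "complex poly" and Pbar Qbar :: dop
    and \<psi> :: "complex \<Rightarrow> complex \<Rightarrow> complex"
  assumes f_monic: "lead_coeff f = 1" and g_monic: "lead_coeff g = 1"
    and theta_nz: "\<theta> \<noteq> 0" and nu_nz: "\<nu> \<noteq> 0"
    and P_monic: "coeff Pbar (degree Pbar) = \<theta>"
    and Q_monic: "coeff Qbar (degree Qbar) = \<nu>"
    and ord_P: "degree Pbar = degree f"
    and psi_def: "\<And>x z. poly \<theta> (exp x) \<noteq> 0 \<Longrightarrow> poly f z \<noteq> 0 \<Longrightarrow>
        \<psi> x z = (1 / poly f z) * left_rat_apply \<theta> Pbar (\<lambda>y. exp (y * z)) x"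
    and inverse: "\<And>x z. poly \<theta> (exp x) \<noteq> 0 \<Longrightarrow> poly \<nu> (exp x) \<noteq> 0 \<Longrightarrow>
        poly f z \<noteq> 0 \<Longrightarrow> poly g z \<noteq> 0 \<Longrightarrow>
        exp (x * z) = (1 / poly g z) * right_rat_apply Qbar \<nu> (\<lambda>y. \<psi> y z) x"
  shows "\<forall>x z. poly \<theta> (exp x) \<noteq> 0 \<and> poly \<nu> (exp x) \<noteq> 0 \<and>
           (\<forall>k::nat. poly f (z + of_nat k) \<noteq> 0 \<and> poly g (z + of_nat k) \<noteq> 0) \<longrightarrow>
      \<psi> x z = (1 / poly \<theta> (exp x)) * (1 / poly f z) * bop_apply Pbar (\<lambda>w. exp (x * w)) z
    \<and> exp (x * z) = (1 / poly \<nu> (exp x)) * bop_apply Qbar (\<lambda>w. (1 / poly g w) * \<psi> x w) z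
    \<and> (1 / poly f z) * bop_apply Pbar (bop_apply Qbar (\<lambda>w. (1 / poly g w) * \<psi> x w)) z
        = poly \<theta> (exp x) * poly \<nu> (exp x) * \<psi> x z
    \<and> left_rat_apply \<theta> Pbar (right_rat_apply Qbar \<nu> (\<lambda>y. \<psi> y z)) x
        = poly f z * poly g z * \<psi> x z"
proof (intro allI impI)
  interpret trig_darboux f g \<theta> \<nu> Pbar Qbar \<psi>
    by unfold_locales (fact theta_nz nu_nz Q_monic psi_def inverse)+
  fix x z
  assume "poly \<theta> (exp x) \<noteq> 0 \<and> poly \<nu> (exp x) \<noteq> 0 \<and>
           (\<forall>k::nat. poly f (z + of_nat k) \<noteq> 0 \<and> poly g (z + of_nat k) \<noteq> 0)"
  then have t: "poly \<theta> (exp x) \<noteq> 0" and n: "poly \<nu> (exp x) \<noteq> 0"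
    and nz: "\<forall>k::nat. poly f (z + of_nat k) \<noteq> 0 \<and> poly g (z + of_nat k) \<noteq> 0"
    by blast+
  from nz have fz: "poly f z \<noteq> 0" and gz: "poly g z \<noteq> 0"
    by (metis add_0_right of_nat_0)+
  show "\<psi> x z = (1 / poly \<theta> (exp x)) * (1 / poly f z) * bop_apply Pbar (\<lambda>w. exp (x * w)) z
    \<and> exp (x * z) = (1 / poly \<nu> (exp x)) * bop_apply Qbar (\<lambda>w. (1 / poly g w) * \<psi> x w) z
    \<and> (1 / poly f z) * bop_apply Pbar (bop_apply Qbar (\<lambda>w. (1 / poly g w) * \<psi> x w)) z
        = poly \<theta> (exp x) * poly \<nu> (exp x) * \<psi> x z
    \<and> left_rat_apply \<theta> Pbar (right_rat_apply Qbar \<nu> (\<lambda>y. \<psi> y z)) x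
        = poly f z * poly g z * \<psi> x z"
    using psi_bop_form[OF t fz] exp_bop_form[OF t n nz] difference_equation[OF t n nz]
      differential_equation[OF t n fz gz]
    by blast
qed

end
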